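(* Let $\mathcal{M}$ be a topological space, $T:\mathcal{M}\to\mathcal{M}$ a map, and $\mu$ a positive measure on $\mathcal{M}$ such that $\phi\mapsto\phi\circ T$ is a well-defined operator $\mathcal{K}:L_2(\mu)\to L_2(\mu)$, and assume $\mathcal{K}$ is bounded. Let $(\psi_i)_{i=1}^\infty$ be an orthonormal basis of $L_2(\mu)$, $\mathcal{F}_N=\mathrm{span}\{\psi_1,\dots,\psi_N\}$, $P_N^\mu$ the $L_2(\mu)$-orthogonal projection onto $\mathcal{F}_N$, and $\mathcal{K}_N=P_N^\mu\mathcal{K}|_{\mathcal{F}_N}:\mathcal{F}_N\to\mathcal{F}_N$. Let $f\in L_2(\mu)^n$ be a vector observable (operators acting componentwise). Then for every $\Omega\in\mathbb{N}$, \[ \lim_{N\to\infty}\sup_{i\in\{1,\dots,\Omega\}}\|(\mathcal{K}_N)^iP_N^\mu f-\mathcal{K}^if\|=0. \] In particular, if $f\in\mathcal{F}_{N_0}^n$ for some $N_0\in\mathbb{N}$, then \[ \lim_{N\to\infty}\sup_{i\in\{1,\dots,\Omega\}}\|(\mathcal{K}_N)^if-\mathcal{K}^if\|=0. \]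
   Context: $\mathcal{K}\phi=\phi\circ T$ is the Koopman operator. For $f=(f_1,\dots,f_n)\in L_2(\mu)^n$, $\|f\|:=\sum_{i=1}^n\|f_i\|_{L_2(\mu)}$. *)

theory Defs
  imports "HOL-Analysis.Analysis"
begin

text \<open>Square-integrable complex-valued functions (representatives of elements of L2(mu)).\<close>
definition L2 :: "'a measure \<Rightarrow> ('a \<Rightarrow> complex) set" where
  "L2 M = {f \<in> borel_measurable M. integrable M (\<lambda>x. (cmod (f x))\<^sup>2)}"

definition l2norm :: "'a measure \<Rightarrow> ('a \<Rightarrow> complex) \<Rightarrow> real" where
  "l2norm M f = sqrt (\<integral>x. (cmod (f x))\<^sup>2 \<partial>M)"

definition l2inner :: "'a measure \<Rightarrow> ('a \<Rightarrow> complex) \<Rightarrow> ('a \<Rightarrow> complex) \<Rightarrow> complex" where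
  "l2inner M f g = (\<integral>x. f x * cnj (g x) \<partial>M)"

definition koopman :: "('a \<Rightarrow> 'a) \<Rightarrow> ('a \<Rightarrow> complex) \<Rightarrow> ('a \<Rightarrow> complex)" where
  "koopman T \<phi> = \<phi> \<circ> T"

definition koopman_L2_bounded :: "'a measure \<Rightarrow> ('a \<Rightarrow> 'a) \<Rightarrow> bool" where
  "koopman_L2_bounded M T \<longleftrightarrow>
     T \<in> measurable M M \<and>
     (\<forall>\<phi>\<in>L2 M. koopman T \<phi> \<in> L2 M) \<and>
     (\<forall>\<phi>\<in>L2 M. \<forall>\<psi>\<in>L2 M. (AE x in M. \<phi> x = \<psi> x) \<longrightarrow>
         (AE x in M. koopman T \<phi> x = koopman T \<psi> x)) \<and>
     (\<exists>C. \<forall>\<phi>\<in>L2 M. l2norm M (koopman T \<phi>) \<le> C * l2norm M \<phi>)"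

text \<open>An orthonormal basis (psi_i), indexed from 0, of L2(M): orthonormal and with dense span.\<close>
definition orthonormal_basis_L2 :: "'a measure \<Rightarrow> (nat \<Rightarrow> 'a \<Rightarrow> complex) \<Rightarrow> bool" where
  "orthonormal_basis_L2 M \<psi> \<longleftrightarrow>
     (\<forall>i. \<psi> i \<in> L2 M) \<and>
     (\<forall>i j. l2inner M (\<psi> i) (\<psi> j) = (if i = j then 1 else 0)) \<and>
     (\<forall>f\<in>L2 M. \<forall>\<epsilon>>0. \<exists>N c. l2norm M (\<lambda>x. f x - (\<Sum>i<N. c i * \<psi> i x)) < \<epsilon>)"

text \<open>Orthogonal projection onto F_N = span {psi_i | i < N} (for an orthonormal family).\<close>
definition projN :: "'a measure \<Rightarrow> (nat \<Rightarrow> 'a \<Rightarrow> complex) \<Rightarrow> nat \<Rightarrow> ('a \<Rightarrow> complex) \<Rightarrow> ('a \<Rightarrow> complex)" where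
  "projN M \<psi> N f = (\<lambda>x. \<Sum>i<N. l2inner M f (\<psi> i) * \<psi> i x)"

definition koopmanN :: "'a measure \<Rightarrow> (nat \<Rightarrow> 'a \<Rightarrow> complex) \<Rightarrow> ('a \<Rightarrow> 'a) \<Rightarrow> nat \<Rightarrow> ('a \<Rightarrow> complex) \<Rightarrow> ('a \<Rightarrow> complex)" where
  "koopmanN M \<psi> T N g = projN M \<psi> N (koopman T g)"

definition inFN :: "'a measure \<Rightarrow> (nat \<Rightarrow> 'a \<Rightarrow> complex) \<Rightarrow> nat \<Rightarrow> ('a \<Rightarrow> complex) \<Rightarrow> bool" where
  "inFN M \<psi> N g \<longleftrightarrow> (\<exists>c. AE x in M. g x = (\<Sum>i<N. c i * \<psi> i x))"

definition vnorm :: "'a measure \<Rightarrow> nat \<Rightarrow> (nat \<Rightarrow> 'a \<Rightarrow> complex) \<Rightarrow> real" where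
  "vnorm M n f = (\<Sum>j<n. l2norm M (f j))"

end

theory Submission
  imports Defs
begin

text \<open>Writing \<open>a\<^sub>N = K\<^sub>N\<^sup>i P\<^sub>N f\<close> and \<open>b = K\<^sup>i f\<close>, one has
  \<open>K\<^sub>N a\<^sub>N - K b = P\<^sub>N K (a\<^sub>N - b) + (P\<^sub>N K b - K b)\<close>. The first term is bounded by
  \<open>\<parallel>K\<parallel> \<parallel>a\<^sub>N - b\<parallel>\<close> by Bessel's inequality and tends to zero by the induction hypothesis;
  the second tends to zero because the truncated expansions of \<open>K b\<close> converge to it,
  the truncation being a best approximation from \<open>F\<^sub>N\<close>. A supremum over finitely many
  exponents and a sum over finitely many components preserve convergence to zero.
  If \<open>f \<in> F\<^sub>N\<^sub>0\<close>, then \<open>P\<^sub>N f = f\<close> almost everywhere for \<open>N \<ge> N\<^sub>0\<close>, and \<open>K\<^sub>N\<close> does not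
  distinguish functions that agree almost everywhere.\<close>

lemma cmod_add_squared_le: "(cmod (a + b))\<^sup>2 \<le> 2 * (cmod a)\<^sup>2 + 2 * (cmod b)\<^sup>2"
proof -
  have "(cmod (a + b))\<^sup>2 \<le> (cmod a + cmod b)\<^sup>2"
    by (simp add: power_mono norm_triangle_ineq)
  also have "\<dots> \<le> 2 * (cmod a)\<^sup>2 + 2 * (cmod b)\<^sup>2"
    using sum_squares_bound[of "cmod a" "cmod b"] by (simp add: power2_sum)
  finally show ?thesis .
qed

lemma cmod_mult_cnj_le: "cmod (a * cnj b) \<le> (cmod a)\<^sup>2 + (cmod b)\<^sup>2"
proof -
  have "2 * (cmod a * cmod b) \<le> (cmod a)\<^sup>2 + (cmod b)\<^sup>2"
    using sum_squares_bound[of "cmod a" "cmod b"] by simp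
  moreover have "0 \<le> cmod a * cmod b" by simp
  moreover have "cmod (a * cnj b) = cmod a * cmod b" by (simp add: norm_mult)
  ultimately show ?thesis by linarith
qed

lemma cmod_add_squared: "(cmod (a + b))\<^sup>2 = (cmod a)\<^sup>2 + (cmod b)\<^sup>2 + 2 * Re (a * cnj b)"
  unfolding cmod_power2 by (simp add: power2_eq_square algebra_simps)

lemma borel_measurable_cnj [measurable]: "cnj \<in> borel_measurable borel"
  by (intro borel_measurable_continuous_onI continuous_intros)

section \<open>The space L2\<close>

lemma L2_add:
  assumes "f \<in> L2 M" "g \<in> L2 M"
  shows "(\<lambda>x. f x + g x) \<in> L2 M"
proof -
  have [measurable]: "f \<in> borel_measurable M" "g \<in> borel_measurable M"
    using assms by (auto simp: L2_def)
  have "integrable M (\<lambda>x. 2 * (cmod (f x))\<^sup>2 + 2 * (cmod (g x))\<^sup>2)"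
    using assms by (simp add: L2_def)
  then have "integrable M (\<lambda>x. (cmod (f x + g x))\<^sup>2)"
    by (rule Bochner_Integration.integrable_bound) (auto intro!: AE_I2 cmod_add_squared_le)
  then show ?thesis by (simp add: L2_def)
qed

lemma L2_cmult:
  assumes "f \<in> L2 M"
  shows "(\<lambda>x. c * f x) \<in> L2 M"
proof -
  have [measurable]: "f \<in> borel_measurable M" using assms by (simp add: L2_def)
  have "integrable M (\<lambda>x. (cmod c)\<^sup>2 * (cmod (f x))\<^sup>2)" using assms by (simp add: L2_def)
  then show ?thesis by (simp add: L2_def norm_mult power_mult_distrib)
qed

lemma L2_diff: "f \<in> L2 M \<Longrightarrow> g \<in> L2 M \<Longrightarrow> (\<lambda>x. f x - g x) \<in> L2 M"
  using L2_add[of f M "\<lambda>x. - 1 * g x"] L2_cmult[of g M "- 1"] by simp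

lemma L2_sum:
  assumes "\<And>i. i \<in> I \<Longrightarrow> g i \<in> L2 M"
  shows "(\<lambda>x. \<Sum>i\<in>I. c i * g i x) \<in> L2 M"
  using assms
proof (induction I rule: infinite_finite_induct)
  case (insert a A)
  then show ?case by (simp add: L2_add L2_cmult)
qed (simp_all add: L2_def)

lemma integrable_mult_cnj_L2:
  assumes "f \<in> L2 M" "g \<in> L2 M"
  shows "integrable M (\<lambda>x. f x * cnj (g x))"
proof -
  have [measurable]: "f \<in> borel_measurable M" "g \<in> borel_measurable M"
    using assms by (auto simp: L2_def)
  have "integrable M (\<lambda>x. (cmod (f x))\<^sup>2 + (cmod (g x))\<^sup>2)" using assms by (simp add: L2_def)
  then show ?thesis
    by (rule Bochner_Integration.integrable_bound) (auto intro!: AE_I2 cmod_mult_cnj_le)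
qed

definition l2sqnorm :: "'a measure \<Rightarrow> ('a \<Rightarrow> complex) \<Rightarrow> real" where
  "l2sqnorm M f = (\<integral>x. (cmod (f x))\<^sup>2 \<partial>M)"

lemma l2sqnorm_nonneg: "0 \<le> l2sqnorm M f"
  unfolding l2sqnorm_def by (rule integral_nonneg_AE) simp

lemma l2norm_eq_sqrt_l2sqnorm: "l2norm M f = sqrt (l2sqnorm M f)"
  by (simp add: l2norm_def l2sqnorm_def)

lemma l2norm_nonneg: "0 \<le> l2norm M f"
  by (simp add: l2norm_eq_sqrt_l2sqnorm l2sqnorm_nonneg)

lemma l2sqnorm_eq_power2_l2norm: "l2sqnorm M f = (l2norm M f)\<^sup>2"
  by (simp add: l2norm_eq_sqrt_l2sqnorm l2sqnorm_nonneg)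

lemma l2sqnorm_diff_commute: "l2sqnorm M (\<lambda>x. a x - b x) = l2sqnorm M (\<lambda>x. b x - a x)"
  unfolding l2sqnorm_def by (simp add: norm_minus_commute)

lemma l2sqnorm_add:
  assumes "a \<in> L2 M" "b \<in> L2 M"
  shows "l2sqnorm M (\<lambda>x. a x + b x) = l2sqnorm M a + l2sqnorm M b + 2 * Re (l2inner M a b)"
proof -
  have ip: "integrable M (\<lambda>x. a x * cnj (b x))" by (rule integrable_mult_cnj_L2[OF assms])
  define r where "r x = Re (a x * cnj (b x))" for x
  have "integrable M r"
    unfolding r_def by (rule integrable_bounded_linear[OF bounded_linear_Re ip])
  moreover have "(\<lambda>x. (cmod (a x + b x))\<^sup>2) = (\<lambda>x. (cmod (a x))\<^sup>2 + (cmod (b x))\<^sup>2 + 2 * r x)"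
    by (simp add: r_def cmod_add_squared)
  ultimately have "l2sqnorm M (\<lambda>x. a x + b x) = l2sqnorm M a + l2sqnorm M b + 2 * integral\<^sup>L M r"
    using assms unfolding l2sqnorm_def by (simp add: L2_def)
  also have "integral\<^sup>L M r = Re (l2inner M a b)"
    unfolding r_def l2inner_def by (rule integral_Re[OF ip])
  finally show ?thesis .
qed

lemma l2sqnorm_add_orthogonal:
  "a \<in> L2 M \<Longrightarrow> b \<in> L2 M \<Longrightarrow> l2inner M a b = 0 \<Longrightarrow>
    l2sqnorm M (\<lambda>x. a x + b x) = l2sqnorm M a + l2sqnorm M b"
  by (simp add: l2sqnorm_add)

lemma l2sqnorm_add_le:
  assumes "a \<in> L2 M" "b \<in> L2 M"
  shows "l2sqnorm M (\<lambda>x. a x + b x) \<le> 2 * l2sqnorm M a + 2 * l2sqnorm M b"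
proof -
  have "l2sqnorm M (\<lambda>x. a x + b x) \<le> (\<integral>x. 2 * (cmod (a x))\<^sup>2 + 2 * (cmod (b x))\<^sup>2 \<partial>M)"
    unfolding l2sqnorm_def using assms L2_add[OF assms]
    by (intro integral_mono) (auto simp: L2_def cmod_add_squared_le)
  also have "\<dots> = 2 * l2sqnorm M a + 2 * l2sqnorm M b"
    using assms by (simp add: L2_def l2sqnorm_def)
  finally show ?thesis .
qed

lemma l2inner_diff_left:
  assumes "a \<in> L2 M" "b \<in> L2 M" "w \<in> L2 M"
  shows "l2inner M (\<lambda>x. a x - b x) w = l2inner M a w - l2inner M b w"
  unfolding l2inner_def
  using integrable_mult_cnj_L2[OF assms(1,3)] integrable_mult_cnj_L2[OF assms(2,3)]
  by (simp add: left_diff_distrib)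

lemma l2inner_sum_left:
  assumes "w \<in> L2 M" "\<And>i. i \<in> I \<Longrightarrow> g i \<in> L2 M"
  shows "l2inner M (\<lambda>x. \<Sum>i\<in>I. d i * g i x) w = (\<Sum>i\<in>I. d i * l2inner M (g i) w)"
  unfolding l2inner_def using integrable_mult_cnj_L2[OF assms(2) assms(1)]
  by (simp add: sum_distrib_right mult.assoc)

lemma l2inner_sum_right:
  assumes "a \<in> L2 M" "\<And>i. i \<in> I \<Longrightarrow> g i \<in> L2 M"
  shows "l2inner M a (\<lambda>x. \<Sum>i\<in>I. d i * g i x) = (\<Sum>i\<in>I. cnj (d i) * l2inner M a (g i))"
proof -
  have "l2inner M a (\<lambda>x. \<Sum>i\<in>I. d i * g i x)
      = (\<integral>x. (\<Sum>i\<in>I. cnj (d i) * (a x * cnj (g i x))) \<partial>M)"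
    unfolding l2inner_def by (simp add: sum_distrib_left mult.left_commute)
  then show ?thesis
    unfolding l2inner_def using integrable_mult_cnj_L2[OF assms(1) assms(2)] by simp
qed

lemma l2inner_cong_AE:
  assumes "a \<in> L2 M" "b \<in> L2 M" "w \<in> L2 M" "AE x in M. a x = b x"
  shows "l2inner M a w = l2inner M b w"
  unfolding l2inner_def using assms(4)
    integrable_mult_cnj_L2[OF assms(1,3)] integrable_mult_cnj_L2[OF assms(2,3)]
  by (intro integral_cong_AE) auto

section \<open>Orthonormal families and truncated expansions\<close>

definition orthonormal_L2 :: "'a measure \<Rightarrow> (nat \<Rightarrow> 'a \<Rightarrow> complex) \<Rightarrow> bool" where
  "orthonormal_L2 M \<psi> \<longleftrightarrow>
     (\<forall>i. \<psi> i \<in> L2 M) \<and> (\<forall>i j. l2inner M (\<psi> i) (\<psi> j) = (if i = j then 1 else 0))"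

lemma orthonormal_basis_L2_imp_orthonormal_L2:
  "orthonormal_basis_L2 M \<psi> \<Longrightarrow> orthonormal_L2 M \<psi>"
  by (simp add: orthonormal_basis_L2_def orthonormal_L2_def)

lemma orthonormal_L2_in_L2: "orthonormal_L2 M \<psi> \<Longrightarrow> \<psi> i \<in> L2 M"
  by (simp add: orthonormal_L2_def)

lemma projN_L2: "(\<And>i. \<psi> i \<in> L2 M) \<Longrightarrow> projN M \<psi> N u \<in> L2 M"
  unfolding projN_def by (rule L2_sum)

lemma l2inner_expansion_orthonormal:
  fixes \<psi> :: "nat \<Rightarrow> 'a \<Rightarrow> complex"
  assumes "orthonormal_L2 M \<psi>"
  shows "l2inner M (\<lambda>x. \<Sum>i<N. c i * \<psi> i x) (\<psi> k) = (if k < N then c k else 0)"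
proof -
  have "l2inner M (\<lambda>x. \<Sum>i<N. c i * \<psi> i x) (\<psi> k) = (\<Sum>i<N. c i * l2inner M (\<psi> i) (\<psi> k))"
    using assms by (intro l2inner_sum_left) (auto simp: orthonormal_L2_def)
  also have "\<dots> = (\<Sum>i<N. if i = k then c i else 0)"
    using assms by (intro sum.cong) (auto simp: orthonormal_L2_def)
  finally show ?thesis by simp
qed

lemma l2inner_projN_orthonormal:
  "orthonormal_L2 M \<psi> \<Longrightarrow> k < N \<Longrightarrow> l2inner M (projN M \<psi> N u) (\<psi> k) = l2inner M u (\<psi> k)"
  unfolding projN_def by (simp add: l2inner_expansion_orthonormal[where c = "\<lambda>i. l2inner M u (\<psi> i)"])

lemma projN_residual_orthogonal:
  assumes ON: "orthonormal_L2 M \<psi>" and u: "u \<in> L2 M"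
  shows "l2inner M (\<lambda>x. u x - projN M \<psi> N u x) (\<lambda>x. \<Sum>i<N. d i * \<psi> i x) = 0"
proof -
  have \<psi>: "\<psi> i \<in> L2 M" for i using ON by (rule orthonormal_L2_in_L2)
  have residual: "(\<lambda>x. u x - projN M \<psi> N u x) \<in> L2 M" using u \<psi> by (intro L2_diff projN_L2)
  have "l2inner M (\<lambda>x. u x - projN M \<psi> N u x) (\<psi> i) = 0" if "i < N" for i
    using u \<psi> ON that by (simp add: l2inner_diff_left projN_L2 l2inner_projN_orthonormal)
  then show ?thesis
    using residual \<psi> by (simp add: l2inner_sum_right)
qed

lemma l2sqnorm_residual_projN:
  assumes ON: "orthonormal_L2 M \<psi>" and u: "u \<in> L2 M"
  shows "l2sqnorm M (\<lambda>x. u x - (\<Sum>i<N. c i * \<psi> i x))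
      = l2sqnorm M (\<lambda>x. u x - projN M \<psi> N u x) + l2sqnorm M (\<lambda>x. projN M \<psi> N u x - (\<Sum>i<N. c i * \<psi> i x))"
proof -
  have \<psi>: "\<psi> i \<in> L2 M" for i using ON by (rule orthonormal_L2_in_L2)
  have "(\<lambda>x. projN M \<psi> N u x - (\<Sum>i<N. c i * \<psi> i x)) = (\<lambda>x. \<Sum>i<N. (l2inner M u (\<psi> i) - c i) * \<psi> i x)"
    by (simp add: projN_def sum_subtractf left_diff_distrib)
  then have "l2inner M (\<lambda>x. u x - projN M \<psi> N u x) (\<lambda>x. projN M \<psi> N u x - (\<Sum>i<N. c i * \<psi> i x)) = 0"
    using projN_residual_orthogonal[OF ON u] by simp
  then show ?thesis
    using l2sqnorm_add_orthogonal[of "\<lambda>x. u x - projN M \<psi> N u x" M "\<lambda>x. projN M \<psi> N u x - (\<Sum>i<N. c i * \<psi> i x)"]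
    using u \<psi> by (simp add: L2_diff projN_L2 L2_sum)
qed

lemma l2sqnorm_projN_le:
  assumes ON: "orthonormal_L2 M \<psi>" and u: "u \<in> L2 M"
  shows "l2sqnorm M (projN M \<psi> N u) \<le> l2sqnorm M u"
  using l2sqnorm_residual_projN[OF ON u, where N = N and c = "\<lambda>_. 0"]
    l2sqnorm_nonneg[of M "\<lambda>x. u x - projN M \<psi> N u x"]
  by simp

lemma l2sqnorm_residual_projN_le:
  assumes ON: "orthonormal_L2 M \<psi>" and u: "u \<in> L2 M" and "N \<le> K"
  shows "l2sqnorm M (\<lambda>x. u x - projN M \<psi> K u x) \<le> l2sqnorm M (\<lambda>x. u x - (\<Sum>i<N. c i * \<psi> i x))"
proof -
  define c' where "c' i = (if i < N then c i else 0)" for i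
  have "(\<Sum>i<K. c' i * \<psi> i x) = (\<Sum>i<N. c i * \<psi> i x)" for x
    using \<open>N \<le> K\<close> by (intro sum.mono_neutral_cong_right) (auto simp: c'_def)
  then show ?thesis
    using l2sqnorm_residual_projN[OF ON u, where N = K and c = c']
      l2sqnorm_nonneg[of M "\<lambda>x. projN M \<psi> K u x - (\<Sum>i<K. c' i * \<psi> i x)"]
    by simp
qed

lemma projN_tendsto:
  assumes ONB: "orthonormal_basis_L2 M \<psi>" and u: "u \<in> L2 M"
  shows "(\<lambda>N. l2sqnorm M (\<lambda>x. u x - projN M \<psi> N u x)) \<longlonglongrightarrow> 0"
proof (rule LIMSEQ_I)
  fix r :: real assume "0 < r"
  then obtain N c where "l2norm M (\<lambda>x. u x - (\<Sum>i<N. c i * \<psi> i x)) < sqrt r"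
    using ONB u unfolding orthonormal_basis_L2_def by (meson real_sqrt_gt_zero)
  then have "l2sqnorm M (\<lambda>x. u x - (\<Sum>i<N. c i * \<psi> i x)) < r"
    by (simp add: l2norm_eq_sqrt_l2sqnorm)
  then have "l2sqnorm M (\<lambda>x. u x - projN M \<psi> K u x) < r" if "N \<le> K" for K
    using l2sqnorm_residual_projN_le[OF orthonormal_basis_L2_imp_orthonormal_L2[OF ONB] u that]
    by (meson le_less_trans)
  then show "\<exists>N. \<forall>K\<ge>N. norm (l2sqnorm M (\<lambda>x. u x - projN M \<psi> K u x) - 0) < r"
    by (auto simp: l2sqnorm_nonneg)
qed

lemma projN_diff:
  assumes "\<And>i. \<psi> i \<in> L2 M" "u \<in> L2 M" "v \<in> L2 M"
  shows "projN M \<psi> N (\<lambda>x. u x - v x) = (\<lambda>x. projN M \<psi> N u x - projN M \<psi> N v x)"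
  unfolding projN_def using assms
  by (simp add: l2inner_diff_left sum_subtractf left_diff_distrib)

lemma projN_eq_AE_if_inFN:
  assumes ON: "orthonormal_L2 M \<psi>" and f: "f \<in> L2 M" and "inFN M \<psi> N\<^sub>0 f" and "N\<^sub>0 \<le> N"
  shows "AE x in M. f x = projN M \<psi> N f x"
proof -
  obtain c where ae: "AE x in M. f x = (\<Sum>i<N\<^sub>0. c i * \<psi> i x)"
    using \<open>inFN M \<psi> N\<^sub>0 f\<close> unfolding inFN_def by blast
  have \<psi>: "\<psi> i \<in> L2 M" for i using ON by (rule orthonormal_L2_in_L2)
  have "l2inner M f (\<psi> k) = (if k < N\<^sub>0 then c k else 0)" for k
    using l2inner_cong_AE[OF f L2_sum[OF \<psi>] \<psi> ae] ON
    by (simp add: l2inner_expansion_orthonormal)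
  then have "projN M \<psi> N f x = (\<Sum>i<N\<^sub>0. c i * \<psi> i x)" for x
    unfolding projN_def using \<open>N\<^sub>0 \<le> N\<close> by (intro sum.mono_neutral_cong_right) auto
  then show ?thesis using ae by simp
qed

section \<open>The Koopman operator and its compressions\<close>

lemma koopman_diff: "koopman T (\<lambda>x. a x - b x) = (\<lambda>x. koopman T a x - koopman T b x)"
  by (simp add: koopman_def comp_def)

lemma koopman_L2: "koopman_L2_bounded M T \<Longrightarrow> \<phi> \<in> L2 M \<Longrightarrow> koopman T \<phi> \<in> L2 M"
  by (simp add: koopman_L2_bounded_def)

lemma funpow_koopman_L2: "koopman_L2_bounded M T \<Longrightarrow> \<phi> \<in> L2 M \<Longrightarrow> (koopman T ^^ i) \<phi> \<in> L2 M"
  by (induction i) (simp_all add: koopman_L2)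

lemma koopman_L2_bounded_l2sqnorm:
  assumes "koopman_L2_bounded M T"
  obtains C where "\<And>\<phi>. \<phi> \<in> L2 M \<Longrightarrow> l2sqnorm M (koopman T \<phi>) \<le> C * l2sqnorm M \<phi>"
proof -
  obtain C where C: "\<And>\<phi>. \<phi> \<in> L2 M \<Longrightarrow> l2norm M (koopman T \<phi>) \<le> C * l2norm M \<phi>"
    using assms unfolding koopman_L2_bounded_def by blast
  have "l2sqnorm M (koopman T \<phi>) \<le> C\<^sup>2 * l2sqnorm M \<phi>" if "\<phi> \<in> L2 M" for \<phi>
    using power_mono[OF C[OF that] l2norm_nonneg, of 2]
    by (simp add: l2sqnorm_eq_power2_l2norm power_mult_distrib)
  then show ?thesis by (rule that)
qed

lemma funpow_koopmanN_projN_L2: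
  "(\<And>i. \<psi> i \<in> L2 M) \<Longrightarrow> (koopmanN M \<psi> T N ^^ i) (projN M \<psi> N f) \<in> L2 M"
  by (cases i) (simp_all add: koopmanN_def projN_L2)

lemma koopmanN_cong_AE:
  assumes K: "koopman_L2_bounded M T" and "\<And>i. \<psi> i \<in> L2 M"
    and "g \<in> L2 M" "g' \<in> L2 M" "AE x in M. g x = g' x"
  shows "koopmanN M \<psi> T N g = koopmanN M \<psi> T N g'"
proof -
  have "AE x in M. koopman T g x = koopman T g' x"
    using K assms(3-5) unfolding koopman_L2_bounded_def by blast
  then have "l2inner M (koopman T g) (\<psi> k) = l2inner M (koopman T g') (\<psi> k)" for k
    using K assms(2-4) by (intro l2inner_cong_AE) (simp_all add: koopman_L2)
  then show ?thesis by (simp add: koopmanN_def projN_def)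
qed

lemma koopmanN_error_le:
  assumes K: "koopman_L2_bounded M T" and ON: "orthonormal_L2 M \<psi>"
    and C: "\<And>\<phi>. \<phi> \<in> L2 M \<Longrightarrow> l2sqnorm M (koopman T \<phi>) \<le> C * l2sqnorm M \<phi>"
    and a: "a \<in> L2 M" and b: "b \<in> L2 M"
  shows "l2sqnorm M (\<lambda>x. koopmanN M \<psi> T N a x - koopman T b x)
      \<le> 2 * C * l2sqnorm M (\<lambda>x. a x - b x)
        + 2 * l2sqnorm M (\<lambda>x. koopman T b x - projN M \<psi> N (koopman T b) x)"
proof -
  have \<psi>: "\<psi> i \<in> L2 M" for i using ON by (rule orthonormal_L2_in_L2)
  define d where "d = (\<lambda>x. a x - b x)"
  have d: "d \<in> L2 M" unfolding d_def using a b by (rule L2_diff)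
  have Kb: "koopman T b \<in> L2 M" using K b by (rule koopman_L2)
  have "(\<lambda>x. koopmanN M \<psi> T N a x - koopman T b x)
      = (\<lambda>x. projN M \<psi> N (koopman T d) x + (projN M \<psi> N (koopman T b) x - koopman T b x))"
    using projN_diff[OF \<psi> koopman_L2[OF K a] Kb]
    by (simp add: d_def koopman_diff koopmanN_def)
  then have "l2sqnorm M (\<lambda>x. koopmanN M \<psi> T N a x - koopman T b x)
      \<le> 2 * l2sqnorm M (projN M \<psi> N (koopman T d))
        + 2 * l2sqnorm M (\<lambda>x. projN M \<psi> N (koopman T b) x - koopman T b x)"
    using \<psi> Kb koopman_L2[OF K d] by (simp add: l2sqnorm_add_le projN_L2 L2_diff)
  also have "l2sqnorm M (projN M \<psi> N (koopman T d)) \<le> l2sqnorm M (koopman T d)"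
    using ON koopman_L2[OF K d] by (rule l2sqnorm_projN_le)
  also have "l2sqnorm M (koopman T d) \<le> C * l2sqnorm M d"
    using d by (rule C)
  finally show ?thesis by (simp add: d_def l2sqnorm_diff_commute)
qed

lemma funpow_koopmanN_projN_tendsto:
  assumes K: "koopman_L2_bounded M T" and ONB: "orthonormal_basis_L2 M \<psi>" and f: "f \<in> L2 M"
  shows "(\<lambda>N. l2sqnorm M (\<lambda>x. (koopmanN M \<psi> T N ^^ i) (projN M \<psi> N f) x - (koopman T ^^ i) f x))
      \<longlonglongrightarrow> 0"
proof (induction i)
  case 0
  show ?case using projN_tendsto[OF ONB f] by (simp add: l2sqnorm_diff_commute)
next
  case (Suc i)
  have ON: "orthonormal_L2 M \<psi>" using ONB by (rule orthonormal_basis_L2_imp_orthonormal_L2)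
  obtain C where C: "\<And>\<phi>. \<phi> \<in> L2 M \<Longrightarrow> l2sqnorm M (koopman T \<phi>) \<le> C * l2sqnorm M \<phi>"
    using koopman_L2_bounded_l2sqnorm[OF K] by blast
  define a where "a N = (koopmanN M \<psi> T N ^^ i) (projN M \<psi> N f)" for N
  define b where "b = (koopman T ^^ i) f"
  have b: "b \<in> L2 M" unfolding b_def using K f by (rule funpow_koopman_L2)
  have a: "a N \<in> L2 M" for N
    unfolding a_def using ON by (intro funpow_koopmanN_projN_L2 orthonormal_L2_in_L2)
  let ?err = "\<lambda>N. l2sqnorm M (\<lambda>x. (koopmanN M \<psi> T N ^^ Suc i) (projN M \<psi> N f) x - (koopman T ^^ Suc i) f x)"
  let ?bound = "\<lambda>N. 2 * C * l2sqnorm M (\<lambda>x. a N x - b x)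
      + 2 * l2sqnorm M (\<lambda>x. koopman T b x - projN M \<psi> N (koopman T b) x)"
  have "?bound \<longlonglongrightarrow> 2 * C * 0 + 2 * 0"
    using Suc projN_tendsto[OF ONB koopman_L2[OF K b]] unfolding a_def b_def
    by (intro tendsto_intros)
  moreover have "?err N \<le> ?bound N" for N
    using koopmanN_error_le[OF K ON C a b, of N] unfolding a_def b_def by simp
  ultimately show ?case
    by (intro tendsto_sandwich[of "\<lambda>_. 0" ?err sequentially ?bound] always_eventually allI)
      (simp_all only: l2sqnorm_nonneg mult_zero_right add_0 tendsto_const)
qed

lemma funpow_koopmanN_eq_projN:
  assumes K: "koopman_L2_bounded M T" and ON: "orthonormal_L2 M \<psi>" and f: "f \<in> L2 M"
    and "inFN M \<psi> N\<^sub>0 f" "N\<^sub>0 \<le> N" and "0 < i"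
  shows "(koopmanN M \<psi> T N ^^ i) f = (koopmanN M \<psi> T N ^^ i) (projN M \<psi> N f)"
proof -
  have \<psi>: "\<psi> i \<in> L2 M" for i using ON by (rule orthonormal_L2_in_L2)
  obtain m where i: "i = Suc m" using \<open>0 < i\<close> gr0_implies_Suc by blast
  have "koopmanN M \<psi> T N f = koopmanN M \<psi> T N (projN M \<psi> N f)"
    using K \<psi> f projN_L2[OF \<psi>] projN_eq_AE_if_inFN[OF ON f assms(4,5)]
    by (rule koopmanN_cong_AE)
  then show ?thesis unfolding i funpow_Suc_right by simp
qed

lemma vnorm_nonneg: "0 \<le> vnorm M n f"
  unfolding vnorm_def by (intro sum_nonneg l2norm_nonneg)

lemma vnorm_funpow_koopmanN_projN_tendsto:
  assumes K: "koopman_L2_bounded M T" and ONB: "orthonormal_basis_L2 M \<psi>" and f: "\<forall>j<n. f j \<in> L2 M"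
  shows "(\<lambda>N. vnorm M n (\<lambda>j x. (koopmanN M \<psi> T N ^^ i) (projN M \<psi> N (f j)) x - (koopman T ^^ i) (f j) x))
      \<longlonglongrightarrow> 0"
proof -
  have "(\<lambda>N. l2norm M (\<lambda>x. (koopmanN M \<psi> T N ^^ i) (projN M \<psi> N (f j)) x - (koopman T ^^ i) (f j) x))
      \<longlonglongrightarrow> 0" if "j < n" for j
    using tendsto_real_sqrt[OF funpow_koopmanN_projN_tendsto[OF K ONB, of "f j" i]] f that
    by (simp add: l2norm_eq_sqrt_l2sqnorm)
  then have "(\<lambda>N. \<Sum>j<n. l2norm M (\<lambda>x. (koopmanN M \<psi> T N ^^ i) (projN M \<psi> N (f j)) x - (koopman T ^^ i) (f j) x))
      \<longlonglongrightarrow> (\<Sum>j<n. 0)"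
    by (intro tendsto_sum) simp
  then show ?thesis by (simp add: vnorm_def)
qed

lemma tendsto_SUP_finite_nonneg_zero:
  fixes g :: "'i \<Rightarrow> nat \<Rightarrow> real"
  assumes "finite I" "I \<noteq> {}" "\<And>i. i \<in> I \<Longrightarrow> g i \<longlonglongrightarrow> 0" "\<And>i N. 0 \<le> g i N"
  shows "(\<lambda>N. SUP i\<in>I. g i N) \<longlonglongrightarrow> 0"
proof (rule tendsto_sandwich[of "\<lambda>_. 0" _ _ "\<lambda>N. \<Sum>i\<in>I. g i N"])
  obtain i\<^sub>0 where "i\<^sub>0 \<in> I" using assms(2) by blast
  have "g i\<^sub>0 N \<le> (SUP i\<in>I. g i N)" for N
    using \<open>i\<^sub>0 \<in> I\<close> by (rule cSUP_upper) (simp add: assms(1) bdd_above_finite)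
  then show "\<forall>\<^sub>F N in sequentially. 0 \<le> (SUP i\<in>I. g i N)"
    by (meson assms(4) always_eventually order_trans)
  have "(SUP i\<in>I. g i N) \<le> (\<Sum>i\<in>I. g i N)" for N
    using assms(2) by (rule cSUP_least) (rule member_le_sum, simp_all add: assms(1,4))
  then show "\<forall>\<^sub>F N in sequentially. (SUP i\<in>I. g i N) \<le> (\<Sum>i\<in>I. g i N)"
    by simp
  have "(\<lambda>N. \<Sum>i\<in>I. g i N) \<longlonglongrightarrow> (\<Sum>i\<in>I. 0)"
    by (intro tendsto_sum assms(3))
  then show "(\<lambda>N. \<Sum>i\<in>I. g i N) \<longlonglongrightarrow> 0" by simp
qed simp

theorem theorem5:
  fixes M :: "'a::topological_space measure"
    and T :: "'a \<Rightarrow> 'a"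
    and \<psi> :: "nat \<Rightarrow> 'a \<Rightarrow> complex"
    and f :: "nat \<Rightarrow> 'a \<Rightarrow> complex"
    and n :: nat and \<Omega> :: nat
  assumes "sets M = sets borel"
    and "koopman_L2_bounded M T"
    and "orthonormal_basis_L2 M \<psi>"
    and "\<forall>j<n. f j \<in> L2 M"
    and "\<Omega> \<ge> 1"
  shows "(\<lambda>N. (SUP i\<in>{1..\<Omega>}. vnorm M n (\<lambda>j x.
              ((koopmanN M \<psi> T N ^^ i) (projN M \<psi> N (f j))) x - ((koopman T ^^ i) (f j)) x)))
           \<longlonglongrightarrow> 0
       \<and> ((\<exists>N\<^sub>0. \<forall>j<n. inFN M \<psi> N\<^sub>0 (f j)) \<longrightarrow>
          (\<lambda>N. (SUP i\<in>{1..\<Omega>}. vnorm M n (\<lambda>j x.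
              ((koopmanN M \<psi> T N ^^ i) (f j)) x - ((koopman T ^^ i) (f j)) x)))
           \<longlonglongrightarrow> 0)"
    (is "?projected \<longlonglongrightarrow> 0 \<and> (_ \<longrightarrow> ?unprojected \<longlonglongrightarrow> 0)")
proof (intro conjI impI)
  show projected: "?projected \<longlonglongrightarrow> 0"
    using assms(2-5)
    by (intro tendsto_SUP_finite_nonneg_zero vnorm_funpow_koopmanN_projN_tendsto vnorm_nonneg) auto
  assume "\<exists>N\<^sub>0. \<forall>j<n. inFN M \<psi> N\<^sub>0 (f j)"
  then obtain N\<^sub>0 where N\<^sub>0: "\<forall>j<n. inFN M \<psi> N\<^sub>0 (f j)" by blast
  have "?projected N = ?unprojected N" if "N\<^sub>0 \<le> N" for N
  proof -
    have "(koopmanN M \<psi> T N ^^ i) (f j) = (koopmanN M \<psi> T N ^^ i) (projN M \<psi> N (f j))"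
      if "i \<in> {1..\<Omega>}" "j < n" for i j
      using assms(4) N\<^sub>0 \<open>N\<^sub>0 \<le> N\<close> that
      by (intro funpow_koopmanN_eq_projN[OF assms(2) orthonormal_basis_L2_imp_orthonormal_L2[OF assms(3)]])
        auto
    then show ?thesis unfolding vnorm_def by (intro SUP_cong refl sum.cong) simp_all
  qed
  then have "\<forall>\<^sub>F N in sequentially. ?projected N = ?unprojected N"
    by (rule eventually_sequentiallyI)
  with projected show "?unprojected \<longlonglongrightarrow> 0" by (rule Lim_transform_eventually)
qed

end
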